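(* Let $P$ be a finite poset with a canonical labeling $\omega$ such that $P$ is $\omega$-consistent and saturated. Then there are antichains $A_0,A_1,\dots,A_k$ such that $$(P,\omega)=A_0\oplus_1A_1\oplus_{-1}A_2\oplus_1A_3\oplus_{-1}\cdots\oplus_{\pm1}A_k,$$ i.e. $P$ is the ordinal sum $A_0\oplus A_1\oplus\cdots\oplus A_k$ and, for each covering relation $x\prec y$ with $x\in A_{i}$, $y\in A_{i+1}$, the induced label is $\epsilon(x,y)=1$ if $i$ is even and $\epsilon(x,y)=-1$ if $i$ is odd.
   Context: Write $x\prec y$ if $y$ covers $x$; a labeling $\omega:P\to\{1,\dots,p\}$ induces $\epsilon(x,y)=1$ if $\omega(x)<\omega(y)$ and $-1$ otherwise on covering pairs. $P$ is $\omega$-consistent if for each $z$ the sum $\sum\epsilon(x_{i-1},x_i)$ is the same over all maximal chains $x_0\prec\cdots\prec x_n$ of $\Lambda_z=\{w\le z\}$; that value is the rank $\rho(z)$. $\omega$ is canonical if $P$ is $\omega$-consistent with rank function taking values in $\{0,1\}$ and $\rho(x)<\rho(y)$ implies $\omega(x)<\omega(y)$. $P$ is saturated if any $x,y$ with $|\rho(x)-\rho(y)|=1$ are comparable. The ordinal sum $P\oplus Q$ of posets has underlying set the disjoint union, with $x\le y$ iff $x\le_P y$, or $x\le_Q y$, or $x\in P,y\in Q$; the labeling $\epsilon\oplus_{1}\mu$ (resp. $\epsilon\oplus_{-1}\mu$) of $E(P\oplus Q)$ agrees with $\epsilon$ on $E(P)$, with $\mu$ on $E(Q)$, and equals $1$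 (resp. $-1$) on the remaining covering pairs (from maximal elements of $P$ to minimal elements of $Q$). Ordinal sums are associative. *)

theory Defs
  imports Main
begin

text \<open>A finite poset is modelled as a finite carrier set P inside an ordered type.
  Covering relation x \<prec> y in P.\<close>
definition covers :: "'a::order set \<Rightarrow> 'a \<Rightarrow> 'a \<Rightarrow> bool" where
  "covers P x y \<longleftrightarrow> x \<in> P \<and> y \<in> P \<and> x < y \<and> \<not> (\<exists>z\<in>P. x < z \<and> z < y)"

definition eps :: "('a \<Rightarrow> nat) \<Rightarrow> 'a \<Rightarrow> 'a \<Rightarrow> int" where
  "eps \<omega> x y = (if \<omega> x < \<omega> y then 1 else -1)"

definition down_set :: "'a::order set \<Rightarrow> 'a \<Rightarrow> 'a set" where
  "down_set P z = {w \<in> P. w \<le> z}"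

definition max_chain :: "'a::order set \<Rightarrow> 'a \<Rightarrow> 'a list \<Rightarrow> bool" where
  "max_chain P z xs \<longleftrightarrow> xs \<noteq> [] \<and> set xs \<subseteq> down_set P z
     \<and> (\<forall>i. Suc i < length xs \<longrightarrow> covers P (xs ! i) (xs ! Suc i))
     \<and> \<not> (\<exists>w\<in>down_set P z. w < hd xs) \<and> last xs = z"

definition chain_sum :: "('a \<Rightarrow> nat) \<Rightarrow> 'a list \<Rightarrow> int" where
  "chain_sum \<omega> xs = (\<Sum>i<length xs - 1. eps \<omega> (xs ! i) (xs ! Suc i))"

definition omega_consistent :: "'a::order set \<Rightarrow> ('a \<Rightarrow> nat) \<Rightarrow> bool" where
  "omega_consistent P \<omega> \<longleftrightarrow> (\<forall>z\<in>P. \<forall>xs ys. max_chain P z xs \<and> max_chain P z ys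
       \<longrightarrow> chain_sum \<omega> xs = chain_sum \<omega> ys)"

text \<open>The rank rho(z): the common value of the chain sums.\<close>
definition rank :: "'a::order set \<Rightarrow> ('a \<Rightarrow> nat) \<Rightarrow> 'a \<Rightarrow> int" where
  "rank P \<omega> z = chain_sum \<omega> (SOME xs. max_chain P z xs)"

definition canonical :: "'a::order set \<Rightarrow> ('a \<Rightarrow> nat) \<Rightarrow> bool" where
  "canonical P \<omega> \<longleftrightarrow> omega_consistent P \<omega>
     \<and> (\<forall>x\<in>P. rank P \<omega> x \<in> {0, 1})
     \<and> (\<forall>x\<in>P. \<forall>y\<in>P. rank P \<omega> x < rank P \<omega> y \<longrightarrow> \<omega> x < \<omega> y)"

definition saturated :: "'a::order set \<Rightarrow> ('a \<Rightarrow> nat) \<Rightarrow> bool" where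
  "saturated P \<omega> \<longleftrightarrow> (\<forall>x\<in>P. \<forall>y\<in>P. \<bar>rank P \<omega> x - rank P \<omega> y\<bar> = 1
       \<longrightarrow> x \<le> y \<or> y \<le> x)"

definition is_antichain :: "'a::order set \<Rightarrow> bool" where
  "is_antichain A \<longleftrightarrow> (\<forall>x\<in>A. \<forall>y\<in>A. x \<le> y \<longrightarrow> x = y)"

end

theory Submission
  imports Defs
begin

text \<open>Since \<rho> takes values in {0,1} and \<rho>(y) = \<rho>(x) + \<epsilon>(x,y) along every covering
  x \<prec> y, the two ends of a covering pair have different ranks, and by saturation any two
  elements of different ranks are comparable. Peeling off minimal elements then produces the
  antichains: the minimal elements have rank 0, each minimal element of the remainder covers a
  removed one and so has rank 1, and every minimal element lies below every non-minimal one.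
  Hence the layers have ranks 0, 1, 0, ..., which forces \<epsilon> to be 1 and -1 alternately
  between consecutive layers.\<close>

definition minimals :: "'a::order set \<Rightarrow> 'a set" where
  "minimals P = {x \<in> P. \<not> (\<exists>w\<in>P. w < x)}"

lemma minimals_subset: "minimals P \<subseteq> P"
  unfolding minimals_def by auto

lemma minimals_nonempty:
  assumes "finite P" "P \<noteq> {}"
  shows "minimals P \<noteq> {}"
  using finite_has_minimal[OF assms] unfolding minimals_def by (auto simp: less_le)

lemma antichain_minimals: "is_antichain (minimals P)"
  unfolding is_antichain_def minimals_def by (auto simp: less_le)

lemma chain_sum_snoc:
  assumes "xs \<noteq> []"
  shows "chain_sum \<omega> (xs @ [y]) = chain_sum \<omega> xs + eps \<omega> (last xs) y"
proof -
  obtain m where m: "length xs = Suc m" using assms by (cases xs) auto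
  have "chain_sum \<omega> (xs @ [y]) = (\<Sum>i<m. eps \<omega> (xs ! i) (xs ! Suc i)) + eps \<omega> (xs ! m) y"
    unfolding chain_sum_def using m by (simp add: nth_append)
  then show ?thesis
    unfolding chain_sum_def using m assms by (simp add: last_conv_nth)
qed

lemma max_chain_snoc:
  assumes chain: "max_chain P x xs" and xy: "covers P x y"
  shows "max_chain P y (xs @ [y])"
proof -
  from chain have ne: "xs \<noteq> []" and last: "last xs = x"
    and below: "set xs \<subseteq> down_set P x"
    and steps: "\<And>i. Suc i < length xs \<Longrightarrow> covers P (xs ! i) (xs ! Suc i)"
    and bottom: "\<not> (\<exists>w\<in>down_set P x. w < hd xs)"
    unfolding max_chain_def by auto
  have "x < y" "y \<in> P" using xy unfolding covers_def by auto
  then have "down_set P x \<subseteq> down_set P y" "y \<in> down_set P y"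
    unfolding down_set_def by auto
  moreover have "covers P ((xs @ [y]) ! i) ((xs @ [y]) ! Suc i)" if "Suc i < length xs + 1" for i
  proof (cases "Suc i < length xs")
    case True
    then show ?thesis using steps by (simp add: nth_append)
  next
    case False
    then have "i = length xs - 1" using that by simp
    then show ?thesis using xy ne last by (simp add: nth_append last_conv_nth)
  qed
  moreover have "\<not> (\<exists>w\<in>down_set P y. w < hd xs)"
  proof -
    have "hd xs \<le> x" using below hd_in_set[OF ne] unfolding down_set_def by auto
    then have "w \<in> down_set P x" if "w \<in> P" "w < hd xs" for w
      using that unfolding down_set_def by (simp add: less_imp_le less_le_trans)
    then show ?thesis using bottom unfolding down_set_def by blast
  qed
  ultimately show ?thesis
    using ne below unfolding max_chain_def by auto
qed

lemma exists_covers_below: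
  assumes "finite P" "z \<in> P - minimals P"
  shows "\<exists>w. covers P w z"
proof -
  have "{w \<in> P. w < z} \<noteq> {}" using assms(2) unfolding minimals_def by auto
  then obtain w where "w \<in> P" "w < z" "\<forall>u\<in>P. u < z \<longrightarrow> w \<le> u \<longrightarrow> w = u"
    using finite_has_maximal[of "{w \<in> P. w < z}"] assms(1) by auto
  then have "covers P w z" using assms(2) unfolding covers_def by (auto simp: less_le)
  then show ?thesis ..
qed

lemma max_chain_exists:
  assumes "finite P" "z \<in> P"
  shows "\<exists>xs. max_chain P z xs"
  using assms(2)
proof (induction "card {w \<in> P. w < z}" arbitrary: z rule: less_induct)
  case less
  show ?case
  proof (cases "z \<in> minimals P")
    case True
    then have "max_chain P z [z]" unfolding max_chain_def down_set_def minimals_def by auto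
    then show ?thesis ..
  next
    case False
    then obtain w where w: "covers P w z" using exists_covers_below assms(1) less.prems by blast
    then have "{u \<in> P. u < w} \<subset> {u \<in> P. u < z}" unfolding covers_def by auto
    then have "card {u \<in> P. u < w} < card {u \<in> P. u < z}"
      using assms(1) by (simp add: psubset_card_mono)
    then obtain xs where "max_chain P w xs" using less.hyps w unfolding covers_def by blast
    then show ?thesis using max_chain_snoc w by blast
  qed
qed

lemma rank_eq_chain_sum:
  assumes "omega_consistent P \<omega>" "max_chain P z xs"
  shows "rank P \<omega> z = chain_sum \<omega> xs"
proof -
  have "z \<in> P" using assms(2) unfolding max_chain_def down_set_def by force
  moreover have "max_chain P z (SOME xs. max_chain P z xs)" using assms(2) by (rule someI)
  ultimately show ?thesis using assms unfolding omega_consistent_def rank_def by blast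
qed

lemma rank_covers:
  assumes "finite P" "omega_consistent P \<omega>" "covers P x y"
  shows "rank P \<omega> y = rank P \<omega> x + eps \<omega> x y"
proof -
  obtain xs where xs: "max_chain P x xs"
    using max_chain_exists assms(1,3) unfolding covers_def by blast
  then have "xs \<noteq> []" "last xs = x" unfolding max_chain_def by auto
  then show ?thesis using rank_eq_chain_sum[OF assms(2)] max_chain_snoc[OF xs assms(3)] xs
    by (simp add: chain_sum_snoc)
qed

lemma rank_minimals:
  assumes "omega_consistent P \<omega>" "x \<in> minimals P"
  shows "rank P \<omega> x = 0"
proof -
  have "max_chain P x [x]" using assms(2) unfolding max_chain_def down_set_def minimals_def by auto
  then show ?thesis using rank_eq_chain_sum[OF assms(1)] by (simp add: chain_sum_def)
qed

definition ordinal_sum_of_antichains :: "'a::order set \<Rightarrow> nat \<Rightarrow> (nat \<Rightarrow> 'a set) \<Rightarrow> bool" where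
  "ordinal_sum_of_antichains P k A \<longleftrightarrow>
     (\<forall>i\<le>k. A i \<noteq> {} \<and> A i \<subseteq> P \<and> is_antichain (A i))
   \<and> P = (\<Union>i\<le>k. A i)
   \<and> (\<forall>i\<le>k. \<forall>j\<le>k. i \<noteq> j \<longrightarrow> A i \<inter> A j = {})
   \<and> (\<forall>i j x y. i < j \<and> j \<le> k \<and> x \<in> A i \<and> y \<in> A j \<longrightarrow> x < y)"

lemma ordinal_sum_of_antichains_single:
  assumes "A \<noteq> {}" "is_antichain A"
  shows "ordinal_sum_of_antichains A 0 (\<lambda>_. A)"
  using assms unfolding ordinal_sum_of_antichains_def by auto

lemma ordinal_sum_of_antichains_Cons:
  assumes sum: "ordinal_sum_of_antichains P k A"
    and M: "M \<noteq> {}" "is_antichain M"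
    and below: "\<And>x y. x \<in> M \<Longrightarrow> y \<in> P \<Longrightarrow> x < y"
  shows "ordinal_sum_of_antichains (M \<union> P) (Suc k) (case_nat M A)"
proof -
  have layers: "\<forall>i\<le>k. A i \<noteq> {} \<and> A i \<subseteq> P \<and> is_antichain (A i)"
    and union: "P = (\<Union>i\<le>k. A i)"
    and less: "\<forall>i j x y. i < j \<and> j \<le> k \<and> x \<in> A i \<and> y \<in> A j \<longrightarrow> x < y"
    using sum unfolding ordinal_sum_of_antichains_def by blast+
  have "\<forall>i\<le>Suc k. case_nat M A i \<noteq> {} \<and> case_nat M A i \<subseteq> M \<union> P \<and> is_antichain (case_nat M A i)"
    using layers M by (auto split: nat.split)
  moreover have "M \<union> P = (\<Union>i\<le>Suc k. case_nat M A i)"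
    using union by (auto simp: atMost_Suc_eq_insert_0)
  moreover have less': "x < y"
    if ij: "i < j" "j \<le> Suc k" and xy: "x \<in> case_nat M A i" "y \<in> case_nat M A j" for i j x y
  proof -
    obtain j' where j': "j = Suc j'" "j' \<le> k" using ij by (cases j) auto
    show ?thesis
    proof (cases i)
      case 0
      then show ?thesis using xy j' union below by auto
    next
      case (Suc i')
      then show ?thesis using ij xy j' less by auto
    qed
  qed
  moreover have "case_nat M A i \<inter> case_nat M A j = {}"
    if "i \<le> Suc k" "j \<le> Suc k" "i \<noteq> j" for i j
    using less'[of i j] less'[of j i] that by (auto simp: nat_neq_iff)
  ultimately show ?thesis unfolding ordinal_sum_of_antichains_def by blast
qed

definition saturated_colouring :: "'a::order set \<Rightarrow> ('a \<Rightarrow> bool) \<Rightarrow> bool" where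
  "saturated_colouring P r \<longleftrightarrow>
     (\<forall>x\<in>P. \<forall>y\<in>P. r x \<noteq> r y \<longrightarrow> x \<le> y \<or> y \<le> x) \<and> (\<forall>x y. covers P x y \<longrightarrow> r x \<noteq> r y)"

lemma covers_remove_minimals: "covers (P - minimals P) x y \<Longrightarrow> covers P x y"
  unfolding covers_def minimals_def by blast

lemma saturated_colouring_remove_minimals:
  "saturated_colouring P r \<Longrightarrow> saturated_colouring (P - minimals P) r"
  using covers_remove_minimals unfolding saturated_colouring_def by blast

lemma minimals_less_nonminimal:
  assumes "finite P" and col: "saturated_colouring P r"
    and x: "x \<in> minimals P" and y: "y \<in> P - minimals P"
  shows "x < y"
proof -
  have less_if_colour_differs: "x < u" if "u \<in> P" "r x \<noteq> r u" for u
  proof -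
    have "x \<le> u \<or> u \<le> x" using col x that minimals_subset unfolding saturated_colouring_def by blast
    moreover have "\<not> u < x" using x that(1) unfolding minimals_def by blast
    ultimately show ?thesis using that(2) by (auto simp: less_le)
  qed
  \<comment> \<open>Of the covering pair w \<prec> y, at least one element differs in colour from x and
    therefore lies above x.\<close>
  obtain w where w: "covers P w y" using exists_covers_below assms(1) y by blast
  then have "r w \<noteq> r y" using col unfolding saturated_colouring_def by blast
  then consider "r x \<noteq> r y" | "r x \<noteq> r w" by blast
  then show ?thesis
  proof cases
    case 1
    then show ?thesis using less_if_colour_differs y by blast
  next
    case 2
    then have "x < w" using less_if_colour_differs w unfolding covers_def by blast
    then show ?thesis using w unfolding covers_def by auto
  qed
qed

lemma colour_minimals_remove_minimals:
  assumes "finite P" and col: "saturated_colouring P r"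
    and c: "\<forall>x\<in>minimals P. r x = c" and y: "y \<in> minimals (P - minimals P)"
  shows "r y = (\<not> c)"
proof -
  have "y \<in> P - minimals P" using y minimals_subset by blast
  then obtain w where w: "covers P w y" using exists_covers_below assms(1) by blast
  then have "w \<in> minimals P" using y unfolding covers_def minimals_def by blast
  moreover have "r w \<noteq> r y" using col w unfolding saturated_colouring_def by blast
  ultimately show ?thesis using c by blast
qed

lemma ordinal_sum_of_antichains_if_saturated_colouring:
  assumes "finite P" "P \<noteq> {}" "saturated_colouring P r" "\<forall>x\<in>minimals P. r x = c"
  shows "\<exists>k A. ordinal_sum_of_antichains P k A \<and> (\<forall>i\<le>k. \<forall>x\<in>A i. r x = (c = even i))"
  using assms
proof (induction "card P" arbitrary: P c rule: less_induct)
  case less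
  note fin = less.prems(1) and col = less.prems(3) and c = less.prems(4)
  have M: "minimals P \<noteq> {}" "is_antichain (minimals P)"
    using minimals_nonempty[OF fin less.prems(2)] antichain_minimals by blast+
  show ?case
  proof (cases "P - minimals P = {}")
    case True
    then have "P = minimals P" using minimals_subset by blast
    then show ?thesis using ordinal_sum_of_antichains_single[OF M] c by auto
  next
    case False
    have "card (P - minimals P) < card P"
      using fin M(1) minimals_subset by (intro psubset_card_mono) auto
    then obtain k A where sum: "ordinal_sum_of_antichains (P - minimals P) k A"
      and colours: "\<forall>i\<le>k. \<forall>x\<in>A i. r x = ((\<not> c) = even i)"
      using less.hyps[of "P - minimals P" "\<not> c"] False fin
        saturated_colouring_remove_minimals[OF col] colour_minimals_remove_minimals[OF fin col c]
      by blast
    have "ordinal_sum_of_antichains (minimals P \<union> (P - minimals P)) (Suc k) (case_nat (minimals P) A)"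
      using ordinal_sum_of_antichains_Cons[OF sum M] minimals_less_nonminimal[OF fin col] by blast
    moreover have "minimals P \<union> (P - minimals P) = P" using minimals_subset by blast
    moreover have "\<forall>i\<le>Suc k. \<forall>x\<in>case_nat (minimals P) A i. r x = (c = even i)"
      using c colours by (auto split: nat.split)
    ultimately show ?thesis by auto
  qed
qed

lemma saturated_colouring_rank_zero:
  assumes "finite P" "omega_consistent P \<omega>" "saturated P \<omega>" "\<forall>x\<in>P. rank P \<omega> x \<in> {0, 1}"
  shows "saturated_colouring P (\<lambda>x. rank P \<omega> x = 0)"
proof -
  have "(rank P \<omega> x = 0) \<noteq> (rank P \<omega> y = 0)" if "covers P x y" for x y
  proof -
    have "x \<in> P" "y \<in> P" using that unfolding covers_def by auto
    then have "rank P \<omega> x \<in> {0, 1}" "rank P \<omega> y \<in> {0, 1}" using assms(4) by blast+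
    moreover have "rank P \<omega> x \<noteq> rank P \<omega> y"
      using rank_covers[OF assms(1,2) that] by (simp add: eps_def)
    ultimately show ?thesis by auto
  qed
  moreover have "x \<le> y \<or> y \<le> x"
    if "x \<in> P" "y \<in> P" "(rank P \<omega> x = 0) \<noteq> (rank P \<omega> y = 0)" for x y
  proof -
    have "rank P \<omega> x \<in> {0, 1}" "rank P \<omega> y \<in> {0, 1}" using assms(4) that(1,2) by blast+
    then have "\<bar>rank P \<omega> x - rank P \<omega> y\<bar> = 1" using that(3) by auto
    then show ?thesis using assms(3) that(1,2) unfolding saturated_def by blast
  qed
  ultimately show ?thesis unfolding saturated_colouring_def by blast
qed

theorem proposition3p4:
  fixes P :: "'a::order set" and \<omega> :: "'a \<Rightarrow> nat"
  assumes "finite P"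
    and "bij_betw \<omega> P {1..card P}"
    and "canonical P \<omega>"
    and "omega_consistent P \<omega>"
    and "saturated P \<omega>"
  shows "P = {} \<or>
    (\<exists>(k::nat) (A :: nat \<Rightarrow> 'a set).
        (\<forall>i\<le>k. A i \<noteq> {} \<and> A i \<subseteq> P \<and> is_antichain (A i))
      \<and> P = (\<Union>i\<le>k. A i)
      \<and> (\<forall>i\<le>k. \<forall>j\<le>k. i \<noteq> j \<longrightarrow> A i \<inter> A j = {})
      \<and> (\<forall>i j x y. i < j \<and> j \<le> k \<and> x \<in> A i \<and> y \<in> A j \<longrightarrow> x < y)
      \<and> (\<forall>i x y. Suc i \<le> k \<and> x \<in> A i \<and> y \<in> A (Suc i) \<and> covers P x y
           \<longrightarrow> eps \<omega> x y = (if even i then 1 else -1)))"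
proof (cases "P = {}")
  case False
  have ranks: "\<forall>x\<in>P. rank P \<omega> x \<in> {0, 1}" using assms(3) unfolding canonical_def by blast
  obtain k A where sum: "ordinal_sum_of_antichains P k A"
    and layer_rank: "\<forall>i\<le>k. \<forall>x\<in>A i. (rank P \<omega> x = 0) = (True = even i)"
    using ordinal_sum_of_antichains_if_saturated_colouring[OF assms(1) False
        saturated_colouring_rank_zero[OF assms(1,4,5) ranks], of True]
      rank_minimals[OF assms(4)] by blast
  have "\<forall>i x y. Suc i \<le> k \<and> x \<in> A i \<and> y \<in> A (Suc i) \<and> covers P x y
           \<longrightarrow> eps \<omega> x y = (if even i then 1 else -1)"
  proof (intro allI impI, elim conjE)
    fix i x y assume "Suc i \<le> k" "x \<in> A i" "y \<in> A (Suc i)" and xy: "covers P x y"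
    then have "(rank P \<omega> x = 0) = even i" "(rank P \<omega> y = 0) = odd i"
      using layer_rank[rule_format, of i x] layer_rank[rule_format, of "Suc i" y] by simp_all
    moreover have "rank P \<omega> x \<in> {0, 1}" "rank P \<omega> y \<in> {0, 1}"
      using xy ranks unfolding covers_def by blast+
    ultimately have "rank P \<omega> x = (if even i then 0 else 1)" "rank P \<omega> y = (if even i then 1 else 0)"
      by auto
    then show "eps \<omega> x y = (if even i then 1 else -1)"
      using rank_covers[OF assms(1,4) xy] by (simp split: if_splits)
  qed
  with sum show ?thesis
    unfolding ordinal_sum_of_antichains_def
    by (intro disjI2 exI[of _ k] exI[of _ A]) (elim conjE; intro conjI; assumption)
qed simp

end
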